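(* Let $\lambda\in P$, $\lhd\in\mathrm{RO}(\lambda,\Delta^+)$ and $w\in W$. For every $A\in\mathcal{A}(w,\Gamma)$, $$n(A)\equiv\mathrm{nega}(\Xi(A))+\ell(\mathrm{end}(A))-\ell(\iota(\Xi(A)))\pmod 2.$$
   Context: Let $\mathfrak{g}$ be a finite-dimensional complex simple Lie algebra with root system $\Delta$, positive roots $\Delta^+$, Weyl group $W$ with length function $\ell$ and reflections $s_\alpha$, weight lattice $P$, pairing $\langle\cdot,\cdot\rangle$, $\alpha^\vee$ the coroot of $\alpha$, $\rho=\frac12\sum_{\alpha\in\Delta^+}\alpha$. For $\alpha\in\Delta$, $\operatorname{sgn}(\alpha)=\pm1$ according as $\alpha\in\pm\Delta^+$, and $|\alpha|=\operatorname{sgn}(\alpha)\alpha$. For $\lambda\in P$, $\Delta^+(\lambda)_{>0}$, $\Delta^+(\lambda)_{=0}$, $\Delta^+(\lambda)_{<0}$ are the sets of $\alpha\in\Delta^+$ with $\langle\lambda,\alpha^\vee\rangle>0$, $=0$, $<0$. Quantum Bruhat graph $\mathrm{QBG}(W)$: vertices $W$; an edge $x\xrightarrow{\alpha}y$ ($\alpha\in\Delta^+$) whenever $y=xs_\alpha$ and either $\ell(y)=\ell(x)+1$ (Bruhat edge) or $\ell(y)=\ell(x)-2\langle\rho,\alpha^\vee\rangle+1$ (quantum edge). For $v,u\in W$, $\ell(v\Rightarrow u)$ denotes the length of a shortest directed path from $v$ to $u$ in $\mathrm{QBG}(W)$. Reflection orders: a total order $\lhd$ on $\Delta^+$ is a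 reflection order if whenever $\alpha,\beta,\alpha+\beta\in\Delta^+$, either $\alpha\lhd\alpha+\beta\lhd\beta$ or $\beta\lhd\alpha+\beta\lhd\alpha$; $\mathrm{RO}(\lambda,\Delta^+)$ is the set of those with $\alpha\lhd\beta\lhd\gamma$ for $\alpha\in\Delta^+(\lambda)_{<0}$, $\beta\in\Delta^+(\lambda)_{=0}$, $\gamma\in\Delta^+(\lambda)_{>0}$. Fix such $\lhd$. Interpolated QLS paths: for $x,y\in W$, $\sigma\in\mathbb{Q}$, write $x\overset{(\lambda,+)}{\Longrightarrow}_\sigma y$ if there is a directed path $x=x_0\xrightarrow{\gamma_1}x_1\to\cdots\xrightarrow{\gamma_r}x_r=y$ in $\mathrm{QBG}(W)$ ($r\ge0$) with all $\gamma_k\in\Delta^+(\lambda)_{>0}$, $\gamma_{k+1}\lhd\gamma_k$ for all $k$, and $\sigma\langle\lambda,\gamma_k^\vee\rangle\in\mathbb{Z}$ for all $k$; $x\overset{(\lambda,-)}{\Longrightarrow}_\sigma y$ is defined identically with $\Delta^+(\lambda)_{<0}$ in place of $\Delta^+(\lambda)_{>0}$. An interpolated QLS path of shape $\lambda$ is a triple $\eta=(x_1,\dots,x_s;y_1,\dots,y_{s-1};\sigma_0,\dots,\sigma_s)$ ($s\ge1$) with $x_i,y_i\in W$, $x_i\ne x_{i+1}$, $y_i\ne y_{i+1}$, $\sigma_i\in\mathbb{Q}$, $0=\sigma_0<\sigma_1<\dots<\sigma_s=1$, and for $1\le i\le s-1$: $x_{i+1}\overset{(\lambda,-)}{\Longrightarrow}_{\sigma_i}y_i$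 and $y_i\overset{(\lambda,+)}{\Longrightarrow}_{\sigma_i}x_i$. $\mathrm{IQLS}(\lambda)$ is the set of these; $\iota(\eta):=x_1$; $\mathrm{nega}(\eta):=\sum_{k=1}^{s-1}\ell(x_{k+1}\Rightarrow y_k)$. Affine data: real affine coroots $\gamma^\vee+k\tilde\delta$ ($\gamma\in\Delta$, $k\in\mathbb{Z}$, $\tilde\delta$ formal); for $\beta^\vee=\gamma^\vee+k\tilde\delta$ put $\overline{\beta^\vee}=\gamma^\vee$, $\overline\beta=\gamma$, $\deg(\beta^\vee)=k$; it is positive if $k>0$ or ($k=0$, $\gamma\in\Delta^+$), negative otherwise; $t_\lambda(\gamma^\vee+k\tilde\delta)=\gamma^\vee+(k-\langle\lambda,\gamma^\vee\rangle)\tilde\delta$; $\mathrm{Inv}(\lambda)$ is the set of positive real affine coroots $\beta^\vee$ with $t_\lambda(\beta^\vee)$ negative (for these, $\langle\lambda,\overline{\beta^\vee}\rangle>0$ and $\overline\beta\in\Delta^+(\lambda)_{>0}\sqcup(-\Delta^+(\lambda)_{<0})$); put $d(\beta^\vee)=\deg(\beta^\vee)/\langle\lambda,\overline{\beta^\vee}\rangle$. Order $\prec$ on $\Delta^+(\lambda)_{>0}\sqcup(-\Delta^+(\lambda)_{<0})$: elements of $\Delta^+(\lambda)_{>0}$ precede those of $-\Delta^+(\lambda)_{<0}$; $\gamma\prec\gamma'$ iff $\gamma\lhd\gamma'$ on $\Delta^+(\lambda)_{>0}$; $-\alpha\prec-\alpha'$ iff $\alpha\lhd\alpha'$ on $-\Delta^+(\lambda)_{<0}$.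 Order $<$ on $\mathrm{Inv}(\lambda)$: $\beta^\vee<\beta'^\vee$ iff $d(\beta^\vee)<d(\beta'^\vee)$, or they are equal and $\overline{\beta'}\prec\overline\beta$. Write $\mathrm{Inv}(\lambda)=\{\beta_1^\vee<\dots<\beta_r^\vee\}$, $\gamma_k:=\overline{\beta_k}$, $d_k:=d(\beta_k^\vee)$, and $\Gamma:=(\gamma_1,\dots,\gamma_r)$. Admissible subsets: for $w\in W$, $\mathcal{A}(w,\Gamma)$ is the set of $A=\{j_1<\dots<j_p\}\subseteq\{1,\dots,r\}$ such that $w=u_0\xrightarrow{|\gamma_{j_1}|}u_1\to\cdots\xrightarrow{|\gamma_{j_p}|}u_p$ is a directed path in $\mathrm{QBG}(W)$, where $u_a:=ws_{|\gamma_{j_1}|}\cdots s_{|\gamma_{j_a}|}$; $\mathrm{end}(A):=u_p$; $n(A):=\#\{j\in A\mid\gamma_j\in-\Delta^+\}$. One has $0\le d_{j_1}\le\dots\le d_{j_p}\le1$. The map $\Xi$: let $0<c_1<\dots<c_{t-1}<1$ ($t\ge1$) be the distinct values among $d_{j_1},\dots,d_{j_p}$ lying strictly between $0$ and $1$; put $c_0:=0$, $c_t:=1$. For $1\le a\le t$ let $m_a:=\#\{b\mid d_{j_b}<c_a\}$; for $1\le a\le t-1$ let $n_a:=m_a+\#\{b\mid m_a<b\le m_{a+1},\ \gamma_{j_b}\in-\Delta^+\}$. Then $\Xi(A):=(x_1,\dots,x_t;y_1,\dots,y_{t-1};\sigma_0,\dots,\sigma_t)$ with $x_i:=u_{m_{t+1-i}}$,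 $y_i:=u_{n_{t-i}}$, $\sigma_i:=1-c_{t-i}$; this lies in $\mathrm{IQLS}(\lambda)$. *)

theory Defs
  imports "HOL-Analysis.Analysis"
begin

definition cpair :: "'a::euclidean_space \<Rightarrow> 'a \<Rightarrow> real" where
  "cpair v \<alpha> = 2 * (v \<bullet> \<alpha>) / (\<alpha> \<bullet> \<alpha>)"

definition refl :: "'a::euclidean_space \<Rightarrow> 'a \<Rightarrow> 'a" where
  "refl \<alpha> v = v - cpair v \<alpha> *\<^sub>R \<alpha>"

text \<open>Irreducible, reduced, crystallographic root system spanning the ambient
  Euclidean space (= root system of a finite-dimensional complex simple Lie algebra).\<close>
definition root_system :: "'a::euclidean_space set \<Rightarrow> bool" where
  "root_system R \<longleftrightarrow>
     finite R \<and> 0 \<notin> R \<and> span R = UNIV \<and>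
     (\<forall>\<alpha>\<in>R. \<forall>\<beta>\<in>R. refl \<alpha> \<beta> \<in> R) \<and>
     (\<forall>\<alpha>\<in>R. \<forall>\<beta>\<in>R. cpair \<beta> \<alpha> \<in> \<int>) \<and>
     (\<forall>\<alpha>\<in>R. \<forall>c::real. c *\<^sub>R \<alpha> \<in> R \<longrightarrow> c = 1 \<or> c = -1) \<and>
     (\<nexists>R1 R2. R1 \<noteq> {} \<and> R2 \<noteq> {} \<and> R1 \<union> R2 = R \<and> R1 \<inter> R2 = {} \<and>
        (\<forall>\<alpha>\<in>R1. \<forall>\<beta>\<in>R2. \<alpha> \<bullet> \<beta> = 0))"

definition pos_system :: "'a::euclidean_space set \<Rightarrow> 'a set \<Rightarrow> bool" where
  "pos_system R Rp \<longleftrightarrow>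
     (\<exists>v. (\<forall>\<alpha>\<in>R. v \<bullet> \<alpha> \<noteq> 0) \<and> Rp = {\<alpha>\<in>R. v \<bullet> \<alpha> > 0})"

definition weights :: "'a::euclidean_space set \<Rightarrow> 'a set" where
  "weights R = {lam. \<forall>\<alpha>\<in>R. cpair lam \<alpha> \<in> \<int>}"

definition rho :: "'a::euclidean_space set \<Rightarrow> 'a" where
  "rho Rp = (1/2) *\<^sub>R (\<Sum>\<alpha>\<in>Rp. \<alpha>)"

inductive_set weyl :: "'a::euclidean_space set \<Rightarrow> ('a \<Rightarrow> 'a) set" for R where
  weyl_id: "id \<in> weyl R"
| weyl_step: "w \<in> weyl R \<Longrightarrow> \<alpha> \<in> R \<Longrightarrow> w \<circ> refl \<alpha> \<in> weyl R"

definition wlen :: "'a::euclidean_space set \<Rightarrow> ('a \<Rightarrow> 'a) \<Rightarrow> nat" where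
  "wlen Rp w = card {\<alpha>\<in>Rp. w \<alpha> \<notin> Rp}"

definition qbg_edge :: "'a::euclidean_space set \<Rightarrow> 'a set \<Rightarrow> ('a \<Rightarrow> 'a) \<Rightarrow> 'a \<Rightarrow> ('a \<Rightarrow> 'a) \<Rightarrow> bool" where
  "qbg_edge R Rp x \<alpha> y \<longleftrightarrow>
     x \<in> weyl R \<and> \<alpha> \<in> Rp \<and> y = x \<circ> refl \<alpha> \<and>
     (wlen Rp y = wlen Rp x + 1 \<or>
      real (wlen Rp y) = real (wlen Rp x) - 2 * cpair (rho Rp) \<alpha> + 1)"

fun qbg_path :: "'a::euclidean_space set \<Rightarrow> 'a set \<Rightarrow> ('a \<Rightarrow> 'a) \<Rightarrow> 'a list \<Rightarrow> ('a \<Rightarrow> 'a) \<Rightarrow> bool" where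
  "qbg_path R Rp x [] y \<longleftrightarrow> x = y"
| "qbg_path R Rp x (\<alpha> # as) y \<longleftrightarrow> qbg_edge R Rp x \<alpha> (x \<circ> refl \<alpha>) \<and> qbg_path R Rp (x \<circ> refl \<alpha>) as y"

definition qbg_dist :: "'a::euclidean_space set \<Rightarrow> 'a set \<Rightarrow> ('a \<Rightarrow> 'a) \<Rightarrow> ('a \<Rightarrow> 'a) \<Rightarrow> nat" where
  "qbg_dist R Rp v u = (LEAST n. \<exists>as. length as = n \<and> qbg_path R Rp v as u)"

fun walk :: "('a::euclidean_space \<Rightarrow> 'a) \<Rightarrow> 'a list \<Rightarrow> ('a \<Rightarrow> 'a)" where
  "walk x [] = x"
| "walk x (\<alpha> # as) = walk (x \<circ> refl \<alpha>) as"

definition refl_order :: "'a::euclidean_space set \<Rightarrow> ('a \<Rightarrow> 'a \<Rightarrow> bool) \<Rightarrow> bool" where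
  "refl_order Rp ord \<longleftrightarrow>
     (\<forall>a b. ord a b \<longrightarrow> a \<in> Rp \<and> b \<in> Rp) \<and>
     (\<forall>a. \<not> ord a a) \<and>
     (\<forall>a b c. ord a b \<longrightarrow> ord b c \<longrightarrow> ord a c) \<and>
     (\<forall>a\<in>Rp. \<forall>b\<in>Rp. a \<noteq> b \<longrightarrow> ord a b \<or> ord b a) \<and>
     (\<forall>a\<in>Rp. \<forall>b\<in>Rp. a + b \<in> Rp \<longrightarrow>
        (ord a (a + b) \<and> ord (a + b) b) \<or> (ord b (a + b) \<and> ord (a + b) a))"

definition RO :: "'a::euclidean_space set \<Rightarrow> 'a \<Rightarrow> ('a \<Rightarrow> 'a \<Rightarrow> bool) set" where
  "RO Rp lam = {ord. refl_order Rp ord \<and>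
     (\<forall>a\<in>Rp. \<forall>b\<in>Rp. cpair lam a < 0 \<and> cpair lam b = 0 \<longrightarrow> ord a b) \<and>
     (\<forall>b\<in>Rp. \<forall>c\<in>Rp. cpair lam b = 0 \<and> cpair lam c > 0 \<longrightarrow> ord b c) \<and>
     (\<forall>a\<in>Rp. \<forall>c\<in>Rp. cpair lam a < 0 \<and> cpair lam c > 0 \<longrightarrow> ord a c)}"

(* affine coroot gamma^vee + k delta encoded as the pair (gamma, k) *)
definition inv_set :: "'a::euclidean_space set \<Rightarrow> 'a set \<Rightarrow> 'a \<Rightarrow> ('a \<times> int) set" where
  "inv_set R Rp lam = {(\<gamma>, k). \<gamma> \<in> R \<and> (k > 0 \<or> (k = 0 \<and> \<gamma> \<in> Rp)) \<and>
      (real_of_int k - cpair lam \<gamma> < 0 \<or> (real_of_int k - cpair lam \<gamma> = 0 \<and> \<gamma> \<notin> Rp))}"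

definition dval :: "'a::euclidean_space \<Rightarrow> ('a \<times> int) \<Rightarrow> real" where
  "dval lam \<beta> = real_of_int (snd \<beta>) / cpair lam (fst \<beta>)"

(* the order prec on Delta+(lam)_{>0} disjoint-union -Delta+(lam)_{<0} *)
definition prec :: "'a::euclidean_space set \<Rightarrow> ('a \<Rightarrow> 'a \<Rightarrow> bool) \<Rightarrow> 'a \<Rightarrow> 'a \<Rightarrow> bool" where
  "prec Rp ord g g' \<longleftrightarrow>
     (g \<in> Rp \<and> g' \<notin> Rp) \<or> (g \<in> Rp \<and> g' \<in> Rp \<and> ord g g') \<or>
     (g \<notin> Rp \<and> g' \<notin> Rp \<and> ord (-g) (-g'))"

definition inv_less :: "'a::euclidean_space set \<Rightarrow> ('a \<Rightarrow> 'a \<Rightarrow> bool) \<Rightarrow> 'a \<Rightarrow> ('a \<times> int) \<Rightarrow> ('a \<times> int) \<Rightarrow> bool" where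
  "inv_less Rp ord lam \<beta> \<beta>' \<longleftrightarrow>
     dval lam \<beta> < dval lam \<beta>' \<or> (dval lam \<beta> = dval lam \<beta>' \<and> prec Rp ord (fst \<beta>') (fst \<beta>))"

section \<open>Admissible subsets (indices are 0-based positions in the list bs)\<close>

definition abs_root :: "'a::euclidean_space set \<Rightarrow> 'a \<Rightarrow> 'a" where
  "abs_root Rp g = (if g \<in> Rp then g else - g)"

definition adm_roots :: "'a::euclidean_space set \<Rightarrow> ('a \<times> int) list \<Rightarrow> nat set \<Rightarrow> 'a list" where
  "adm_roots Rp bs A = map (\<lambda>j. abs_root Rp (fst (bs ! j))) (sorted_list_of_set A)"

definition admissible :: "'a::euclidean_space set \<Rightarrow> 'a set \<Rightarrow> ('a \<times> int) list \<Rightarrow> ('a \<Rightarrow> 'a) \<Rightarrow> nat set \<Rightarrow> bool" where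
  "admissible R Rp bs w A \<longleftrightarrow> A \<subseteq> {..<length bs} \<and>
     qbg_path R Rp w (adm_roots Rp bs A) (walk w (adm_roots Rp bs A))"

definition end_adm :: "'a::euclidean_space set \<Rightarrow> ('a \<times> int) list \<Rightarrow> ('a \<Rightarrow> 'a) \<Rightarrow> nat set \<Rightarrow> ('a \<Rightarrow> 'a)" where
  "end_adm Rp bs w A = walk w (adm_roots Rp bs A)"

definition n_adm :: "'a::euclidean_space set \<Rightarrow> ('a \<times> int) list \<Rightarrow> nat set \<Rightarrow> nat" where
  "n_adm Rp bs A = card {j\<in>A. fst (bs ! j) \<notin> Rp}"

(* an interpolated QLS path (x_1..x_s; y_1..y_{s-1}; sigma_0..sigma_s) is encoded as a triple of lists *)
definition Xi :: "'a::euclidean_space set \<Rightarrow> 'a \<Rightarrow> ('a \<times> int) list \<Rightarrow> ('a \<Rightarrow> 'a) \<Rightarrow> nat set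
                  \<Rightarrow> ('a \<Rightarrow> 'a) list \<times> ('a \<Rightarrow> 'a) list \<times> real list" where
  "Xi Rp lam bs w A =
    (let js = sorted_list_of_set A; p = length js;
         dd = (\<lambda>b. dval lam (bs ! (js ! (b - 1))));
         cs = sorted_list_of_set {dd b | b. b \<in> {1..p} \<and> 0 < dd b \<and> dd b < 1};
         t = length cs + 1;
         c = (\<lambda>a. if a = 0 then 0 else if t \<le> a then 1 else cs ! (a - 1));
         m = (\<lambda>a. card {b \<in> {1..p}. dd b < c a});
         n = (\<lambda>a. m a + card {b \<in> {1..p}. m a < b \<and> b \<le> m (a + 1) \<and> fst (bs ! (js ! (b - 1))) \<notin> Rp});
         u = (\<lambda>k. walk w (take k (adm_roots Rp bs A)))
     in (map (\<lambda>i. u (m (t + 1 - i))) [1..<t + 1],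
         map (\<lambda>i. u (n (t - i))) [1..<t],
         map (\<lambda>i. 1 - c (t - i)) [0..<t + 1]))"

definition iota :: "('a \<Rightarrow> 'a) list \<times> ('a \<Rightarrow> 'a) list \<times> real list \<Rightarrow> ('a \<Rightarrow> 'a)" where
  "iota \<eta> = hd (fst \<eta>)"

definition nega :: "'a::euclidean_space set \<Rightarrow> 'a set \<Rightarrow> ('a \<Rightarrow> 'a) list \<times> ('a \<Rightarrow> 'a) list \<times> real list \<Rightarrow> nat" where
  "nega R Rp \<eta> = (\<Sum>k<length (fst \<eta>) - 1. qbg_dist R Rp (fst \<eta> ! (k + 1)) (fst (snd \<eta>) ! k))"

end

theory Submission
  imports Defs
begin

(* A quantum Bruhat edge changes the length by 1 or by 1 - 2<rho, alpha^vee>, and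
   <rho, alpha^vee> is an integer; so along a directed path the length changes by the number
   of steps mod 2, and l(v => u) = l(u) - l(v) mod 2.  Let u_0, ..., u_p be the vertices of the
   admissible path of A.  In Xi(A) the vertices x_(a+1) = u_(m_a) and y_a = u_(n_a) are joined
   by the segment of length n_a - m_a, the number of b in (m_a, m_(a+1)] with gamma_(j_b)
   negative, while iota(Xi(A)) = u_(m_t) and end(A) = u_p.  Hence, mod 2,
   nega(Xi(A)) + l(end A) - l(iota(Xi(A))) is the number of negative gamma_(j_b) with
   m_1 < b <= m_t, plus p - m_t.  That is n(A): a negative gamma_(j_b) has d_(j_b) > 0, so
   b > m_1, and every b > m_t has d_(j_b) = 1 and is therefore negative. *)

section \<open>Integrality of the pairing with rho\<close>

lemma cpair_diff: "cpair (a - b) \<alpha> = cpair a \<alpha> - cpair b \<alpha>"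
  by (simp add: cpair_def inner_diff_left diff_divide_distrib)

lemma cpair_scaleR: "cpair (c *\<^sub>R a) \<alpha> = c * cpair a \<alpha>"
  by (simp add: cpair_def)

lemma cpair_uminus: "cpair (- a) \<alpha> = - cpair a \<alpha>"
  by (simp add: cpair_def)

lemma cpair_sum: "cpair (sum f S) \<alpha> = (\<Sum>x\<in>S. cpair (f x) \<alpha>)"
  by (simp add: cpair_def inner_sum_left sum_divide_distrib sum_distrib_left)

lemma cpair_self: "\<alpha> \<noteq> 0 \<Longrightarrow> cpair \<alpha> \<alpha> = 2"
  by (simp add: cpair_def)

lemma cpair_refl: "\<alpha> \<noteq> 0 \<Longrightarrow> cpair (refl \<alpha> v) \<alpha> = - cpair v \<alpha>"
  by (simp add: refl_def cpair_diff cpair_scaleR cpair_self)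

lemma refl_refl: "\<alpha> \<noteq> 0 \<Longrightarrow> refl \<alpha> (refl \<alpha> v) = v"
  by (simp add: refl_def [of _ "refl \<alpha> v"] cpair_refl) (simp add: refl_def)

lemma refl_uminus: "refl \<alpha> (- v) = - refl \<alpha> v"
  by (simp add: refl_def cpair_uminus)

lemma refl_self: "\<alpha> \<noteq> 0 \<Longrightarrow> refl \<alpha> \<alpha> = - \<alpha>"
  by (simp add: refl_def cpair_self scaleR_2)

lemma root_systemD:
  assumes "root_system R"
  shows "finite R" and "0 \<notin> R" and "\<And>\<alpha> \<beta>. \<alpha> \<in> R \<Longrightarrow> \<beta> \<in> R \<Longrightarrow> refl \<alpha> \<beta> \<in> R"
    and "\<And>\<alpha> \<beta>. \<alpha> \<in> R \<Longrightarrow> \<beta> \<in> R \<Longrightarrow> cpair \<beta> \<alpha> \<in> \<int>"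
    and "\<And>\<alpha> c. \<alpha> \<in> R \<Longrightarrow> c *\<^sub>R \<alpha> \<in> R \<Longrightarrow> c = 1 \<or> c = -1"
proof -
  have "finite R \<and> 0 \<notin> R \<and> (\<forall>\<alpha>\<in>R. \<forall>\<beta>\<in>R. refl \<alpha> \<beta> \<in> R) \<and> (\<forall>\<alpha>\<in>R. \<forall>\<beta>\<in>R. cpair \<beta> \<alpha> \<in> \<int>)
      \<and> (\<forall>\<alpha>\<in>R. \<forall>c::real. c *\<^sub>R \<alpha> \<in> R \<longrightarrow> c = 1 \<or> c = -1)"
    using assms unfolding root_system_def by (elim conjE) (intro conjI)
  then show "finite R" "0 \<notin> R" "\<And>\<alpha> \<beta>. \<alpha> \<in> R \<Longrightarrow> \<beta> \<in> R \<Longrightarrow> refl \<alpha> \<beta> \<in> R"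
    "\<And>\<alpha> \<beta>. \<alpha> \<in> R \<Longrightarrow> \<beta> \<in> R \<Longrightarrow> cpair \<beta> \<alpha> \<in> \<int>"
    "\<And>\<alpha> c. \<alpha> \<in> R \<Longrightarrow> c *\<^sub>R \<alpha> \<in> R \<Longrightarrow> c = 1 \<or> c = -1"
    by blast+
qed

lemma root_system_uminus:
  assumes "root_system R" "\<beta> \<in> R"
  shows "- \<beta> \<in> R"
proof -
  have "refl \<beta> \<beta> \<in> R" "\<beta> \<noteq> 0"
    using root_systemD(2,3)[OF assms(1)] assms(2) by blast+
  then show ?thesis
    by (simp add: refl_self)
qed

lemma pos_system_subset: "pos_system R Rp \<Longrightarrow> Rp \<subseteq> R"
  unfolding pos_system_def by blast

lemma abs_root_mem:
  assumes "root_system R" "pos_system R Rp" "\<beta> \<in> R"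
  shows "abs_root Rp \<beta> \<in> Rp"
proof -
  obtain v where v: "\<forall>\<gamma>\<in>R. v \<bullet> \<gamma> \<noteq> 0" and Rp: "Rp = {\<gamma>\<in>R. v \<bullet> \<gamma> > 0}"
    using assms(2) unfolding pos_system_def by blast
  have "- \<beta> \<in> R"
    using assms(1,3) by (rule root_system_uminus)
  moreover have "v \<bullet> \<beta> \<noteq> 0"
    using v assms(3) by blast
  ultimately show ?thesis
    using assms(3) unfolding abs_root_def Rp by auto
qed

lemma abs_root_uminus: "pos_system R Rp \<Longrightarrow> \<beta> \<in> Rp \<Longrightarrow> abs_root Rp (- \<beta>) = \<beta>"
  unfolding pos_system_def abs_root_def by auto

lemma even_card_involution:
  assumes "finite S" and "\<And>x. x \<in> S \<Longrightarrow> f x \<in> S" and "\<And>x. x \<in> S \<Longrightarrow> f (f x) = x"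
    and "\<And>x. x \<in> S \<Longrightarrow> f x \<noteq> x"
  shows "even (card S)"
  using assms
proof (induction S rule: finite_psubset_induct)
  case (psubset S)
  show ?case
  proof (cases "S = {}")
    case False
    then obtain x where x: "x \<in> S" by blast
    define T where "T = S - {x, f x}"
    have fx: "f x \<in> S" "f x \<noteq> x" "f (f x) = x"
      using psubset.prems x by blast+
    have T_closed: "f y \<in> T" if "y \<in> T" for y
    proof -
      have "y \<in> S" "y \<noteq> x" "y \<noteq> f x"
        using that unfolding T_def by blast+
      then have "f y \<in> S" "f y \<noteq> f x" "f y \<noteq> x"
        using psubset.prems fx by metis+
      then show ?thesis
        unfolding T_def by blast
    qed
    have "T \<subset> S"
      using x unfolding T_def by blast
    then have "even (card T)"
      using psubset.prems T_closed by (intro psubset.IH) (auto simp: T_def)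
    moreover have "card S = card T + 2"
      using psubset.hyps x fx card_mono[OF psubset.hyps, of "{x, f x}"]
      unfolding T_def by (simp add: card_Diff_subset)
    ultimately show ?thesis by simp
  qed simp
qed

lemma even_sum_involution:
  fixes g :: "'a \<Rightarrow> int"
  assumes "finite S" and "\<And>x. x \<in> S \<Longrightarrow> f x \<in> S" and "\<And>x. x \<in> S \<Longrightarrow> f (f x) = x"
    and "\<And>x. x \<in> S \<Longrightarrow> even (g (f x) - g x)" and "\<And>x. x \<in> S \<Longrightarrow> f x = x \<Longrightarrow> even (g x)"
  shows "even (sum g S)"
proof -
  have "even (card {x \<in> S. odd (g x)})"
  proof (rule even_card_involution)
    fix x assume x: "x \<in> {x \<in> S. odd (g x)}"
    show "f x \<in> {x \<in> S. odd (g x)}"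
      using assms(2,4) x by (auto simp: even_diff)
    show "f (f x) = x" "f x \<noteq> x"
      using assms(3,5) x by auto
  qed (use assms(1) in simp)
  then show ?thesis
    by (simp add: even_sum_iff[OF assms(1)])
qed

lemma cpair_abs_root_refl:
  assumes "\<alpha> \<noteq> 0"
  shows "cpair (abs_root Rp (refl \<alpha> \<beta>)) \<alpha> = cpair \<beta> \<alpha> \<or> cpair (abs_root Rp (refl \<alpha> \<beta>)) \<alpha> = - cpair \<beta> \<alpha>"
  unfolding abs_root_def by (simp add: cpair_uminus cpair_refl assms)

lemma abs_root_refl_involutive:
  assumes "pos_system R Rp" "\<alpha> \<noteq> 0" "\<beta> \<in> Rp"
  shows "abs_root Rp (refl \<alpha> (abs_root Rp (refl \<alpha> \<beta>))) = \<beta>"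
proof (cases "refl \<alpha> \<beta> \<in> Rp")
  case True
  then show ?thesis
    using assms(3) unfolding abs_root_def by (simp add: refl_refl assms(2))
next
  case False
  then have "abs_root Rp (refl \<alpha> (abs_root Rp (refl \<alpha> \<beta>))) = abs_root Rp (- \<beta>)"
    unfolding abs_root_def by (simp add: refl_uminus refl_refl assms(2))
  then show ?thesis
    using abs_root_uminus[OF assms(1,3)] by simp
qed

lemma cpair_abs_root_refl_fixed:
  assumes "root_system R" "\<alpha> \<in> R" "\<beta> \<in> R" "abs_root Rp (refl \<alpha> \<beta>) = \<beta>"
  shows "cpair \<beta> \<alpha> \<in> {-2, 0, 2}"
proof (cases "refl \<alpha> \<beta> \<in> Rp")
  case True
  then have "refl \<alpha> \<beta> = \<beta>"
    using assms(4) unfolding abs_root_def by simp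
  moreover have "\<alpha> \<noteq> 0"
    using root_systemD(2)[OF assms(1)] assms(2) by blast
  ultimately show ?thesis
    unfolding refl_def by simp
next
  case False
  then have "refl \<alpha> \<beta> = - \<beta>"
    using assms(4) unfolding abs_root_def by (simp add: minus_equation_iff)
  then have "cpair \<beta> \<alpha> *\<^sub>R \<alpha> = 2 *\<^sub>R \<beta>"
    unfolding refl_def by (simp add: scaleR_2 eq_neg_iff_add_eq_0 algebra_simps)
  then have "(1 / 2) *\<^sub>R (cpair \<beta> \<alpha> *\<^sub>R \<alpha>) = \<beta>"
    by simp
  then have "(cpair \<beta> \<alpha> / 2) *\<^sub>R \<alpha> \<in> R"
    using assms(3) by simp
  then have "cpair \<beta> \<alpha> / 2 = 1 \<or> cpair \<beta> \<alpha> / 2 = -1"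
    by (rule root_systemD(5)[OF assms(1,2)])
  then show ?thesis
    by auto
qed

(* Sum over beta in Rp of <beta, alpha^vee> is even: pair beta with |s_alpha beta|. *)
lemma cpair_rho_Ints:
  assumes R: "root_system R" and Rp: "pos_system R Rp" and \<alpha>: "\<alpha> \<in> R"
  shows "cpair (rho Rp) \<alpha> \<in> \<int>"
proof -
  have \<alpha>0: "\<alpha> \<noteq> 0"
    using root_systemD(2)[OF R] \<alpha> by blast
  have RpR: "Rp \<subseteq> R"
    using Rp by (rule pos_system_subset)
  define f where "f \<beta> = abs_root Rp (refl \<alpha> \<beta>)" for \<beta>
  define g where "g \<beta> = \<lfloor>cpair \<beta> \<alpha>\<rfloor>" for \<beta>
  have g: "of_int (g \<beta>) = cpair \<beta> \<alpha>" if "\<beta> \<in> R" for \<beta>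
    using root_systemD(4)[OF R \<alpha> that] unfolding g_def by (auto elim: Ints_cases)
  have f_mem: "f \<beta> \<in> Rp" if "\<beta> \<in> Rp" for \<beta>
    unfolding f_def using abs_root_mem[OF R Rp] root_systemD(3)[OF R \<alpha>] that RpR by blast
  have "even (\<Sum>\<beta>\<in>Rp. g \<beta>)"
  proof (rule even_sum_involution)
    show "finite Rp"
      using root_systemD(1)[OF R] RpR by (rule finite_subset[rotated])
    fix \<beta> assume \<beta>: "\<beta> \<in> Rp"
    then have \<beta>R: "\<beta> \<in> R" "f \<beta> \<in> R"
      using f_mem RpR by blast+
    show "f \<beta> \<in> Rp"
      using \<beta> by (rule f_mem)
    show "f (f \<beta>) = \<beta>"
      unfolding f_def using Rp \<alpha>0 \<beta> by (rule abs_root_refl_involutive)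
    have "g (f \<beta>) = g \<beta> \<or> g (f \<beta>) = - g \<beta>"
      using cpair_abs_root_refl[OF \<alpha>0, of Rp \<beta>] g[OF \<beta>R(1)] g[OF \<beta>R(2)]
      unfolding f_def by (metis of_int_eq_iff of_int_minus)
    then show "even (g (f \<beta>) - g \<beta>)"
      by auto
    show "even (g \<beta>)" if "f \<beta> = \<beta>"
    proof -
      have "cpair \<beta> \<alpha> \<in> {-2, 0, 2}"
        using cpair_abs_root_refl_fixed[OF R \<alpha> \<beta>R(1)] that unfolding f_def by blast
      then show ?thesis
        unfolding g_def by auto
    qed
  qed
  then obtain k where k: "(\<Sum>\<beta>\<in>Rp. g \<beta>) = 2 * k" ..
  have "cpair (rho Rp) \<alpha> = (\<Sum>\<beta>\<in>Rp. cpair \<beta> \<alpha>) / 2"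
    unfolding rho_def by (simp add: cpair_scaleR cpair_sum)
  also have "\<dots> = of_int (\<Sum>\<beta>\<in>Rp. g \<beta>) / 2"
    using g RpR by (simp add: subset_iff)
  finally show ?thesis
    using k by simp
qed

section \<open>Parity of lengths along the quantum Bruhat graph\<close>

lemma qbg_edge_wlen_odd:
  assumes "root_system R" "pos_system R Rp" "qbg_edge R Rp x \<alpha> y"
  shows "odd (int (wlen Rp y) - int (wlen Rp x))"
proof -
  have "\<alpha> \<in> R"
    using assms(3) pos_system_subset[OF assms(2)] unfolding qbg_edge_def by blast
  then obtain z where z: "cpair (rho Rp) \<alpha> = of_int z"
    using cpair_rho_Ints[OF assms(1,2)] by (auto elim: Ints_cases)
  have "wlen Rp y = wlen Rp x + 1 \<or> real (wlen Rp y) = real (wlen Rp x) - 2 * cpair (rho Rp) \<alpha> + 1"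
    using assms(3) unfolding qbg_edge_def by blast
  then have "int (wlen Rp y) = int (wlen Rp x) + 1 \<or> int (wlen Rp y) = int (wlen Rp x) - 2 * z + 1"
    unfolding z by linarith
  then show ?thesis
    by (elim disjE) simp_all
qed

lemma qbg_path_append:
  "qbg_path R Rp x (as @ bs) z \<longleftrightarrow> qbg_path R Rp x as (walk x as) \<and> qbg_path R Rp (walk x as) bs z"
  by (induction as arbitrary: x) auto

lemma qbg_path_wlen_parity:
  assumes "root_system R" "pos_system R Rp" "qbg_path R Rp x as y"
  shows "even (int (wlen Rp y) - int (wlen Rp x) - int (length as))"
  using assms(3)
proof (induction as arbitrary: x)
  case (Cons \<alpha> as)
  then have "odd (int (wlen Rp (x \<circ> refl \<alpha>)) - int (wlen Rp x))"
    and "even (int (wlen Rp y) - int (wlen Rp (x \<circ> refl \<alpha>)) - int (length as))"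
    using qbg_edge_wlen_odd[OF assms(1,2)] by auto
  moreover have "int (length (\<alpha> # as)) = int (length as) + 1"
    by simp
  ultimately show ?case
    by presburger
qed simp

lemma qbg_dist_parity:
  assumes "root_system R" "pos_system R Rp" "qbg_path R Rp x as y"
  shows "even (int (qbg_dist R Rp x y) - int (length as))"
proof -
  obtain as' where "length as' = qbg_dist R Rp x y" "qbg_path R Rp x as' y"
    using LeastI_ex[of "\<lambda>n. \<exists>as. length as = n \<and> qbg_path R Rp x as y"] assms(3)
    unfolding qbg_dist_def by blast
  then have "even (int (wlen Rp y) - int (wlen Rp x) - int (qbg_dist R Rp x y))"
    using qbg_path_wlen_parity[OF assms(1,2)] by metis
  moreover have "even (int (wlen Rp y) - int (wlen Rp x) - int (length as))"
    using qbg_path_wlen_parity[OF assms] .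
  ultimately have "even ((int (wlen Rp y) - int (wlen Rp x) - int (length as))
      - (int (wlen Rp y) - int (wlen Rp x) - int (qbg_dist R Rp x y)))"
    by (rule dvd_diff[rotated])
  then show ?thesis
    by simp
qed

section \<open>The statistics of Xi\<close>

lemma sum_telescope_additive:
  fixes f :: "nat \<Rightarrow> nat \<Rightarrow> nat" and m :: "nat \<Rightarrow> nat" and t :: nat
  assumes additive: "\<And>i j k. i \<le> j \<Longrightarrow> j \<le> k \<Longrightarrow> f i k = f i j + f j k"
    and mono: "mono_on {1..t} m" and "1 \<le> t"
  shows "(\<Sum>a\<in>{1..<t}. f (m a) (m (a + 1))) = f (m 1) (m t)"
proof -
  have "(\<Sum>a\<in>{1..<n}. f (m a) (m (a + 1))) = f (m 1) (m n)" if "1 \<le> n" "n \<le> t" for n :: nat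
    using that
  proof (induction n)
    case (Suc n)
    show ?case
    proof (cases "n = 0")
      case True
      have "f (m 1) (m 1) = f (m 1) (m 1) + f (m 1) (m 1)"
        by (rule additive) simp_all
      then show ?thesis
        using True by simp
    next
      case False
      then have "m 1 \<le> m n" "m n \<le> m (Suc n)"
        using Suc.prems by (auto intro: mono_onD[OF mono])
      have "(\<Sum>a\<in>{1..<Suc n}. f (m a) (m (a + 1)))
          = (\<Sum>a\<in>{1..<n}. f (m a) (m (a + 1))) + f (m n) (m (Suc n))"
        using False by simp
      also have "\<dots> = f (m 1) (m n) + f (m n) (m (Suc n))"
        using Suc False by simp
      also have "\<dots> = f (m 1) (m (Suc n))"
        by (rule additive[symmetric]) fact+
      finally show ?thesis .
    qed
  qed simp
  then show ?thesis
    using assms(3) by simp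
qed

(* For d b = d_(j_b) and p = #A these are c_1 < ... < c_(t-1), t, c_a and m_a from the
   construction of Xi. *)
definition xi_cuts :: "(nat \<Rightarrow> real) \<Rightarrow> nat \<Rightarrow> real list" where
  "xi_cuts d p = sorted_list_of_set {d b | b. b \<in> {1..p} \<and> 0 < d b \<and> d b < 1}"

definition xi_len :: "(nat \<Rightarrow> real) \<Rightarrow> nat \<Rightarrow> nat" where
  "xi_len d p = length (xi_cuts d p) + 1"

definition xi_cut :: "(nat \<Rightarrow> real) \<Rightarrow> nat \<Rightarrow> nat \<Rightarrow> real" where
  "xi_cut d p a = (if a = 0 then 0 else if xi_len d p \<le> a then 1 else xi_cuts d p ! (a - 1))"

definition xi_below :: "(nat \<Rightarrow> real) \<Rightarrow> nat \<Rightarrow> nat \<Rightarrow> nat" where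
  "xi_below d p a = card {b \<in> {1..p}. d b < xi_cut d p a}"

lemma set_xi_cuts: "set (xi_cuts d p) = {d b | b. b \<in> {1..p} \<and> 0 < d b \<and> d b < 1}"
proof -
  have "{d b | b. b \<in> {1..p} \<and> 0 < d b \<and> d b < 1} = d ` {b \<in> {1..p}. 0 < d b \<and> d b < 1}"
    by blast
  then show ?thesis
    unfolding xi_cuts_def by simp
qed

lemma xi_cut_last: "xi_cut d p (xi_len d p) = 1"
  by (simp add: xi_cut_def xi_len_def)

lemma xi_cut_le_one: "xi_cut d p a \<le> 1"
proof -
  have "x < 1" if "x \<in> set (xi_cuts d p)" for x
    using that by (auto simp: set_xi_cuts)
  then show ?thesis
    unfolding xi_cut_def xi_len_def by (auto intro: less_imp_le)
qed

lemma xi_cut_mono: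
  assumes "1 \<le> a" "a \<le> a'" "a' \<le> xi_len d p"
  shows "xi_cut d p a \<le> xi_cut d p a'"
proof (cases "a' = xi_len d p")
  case True
  then show ?thesis
    using xi_cut_le_one xi_cut_last by metis
next
  case False
  then have "xi_cut d p a = xi_cuts d p ! (a - 1)" "xi_cut d p a' = xi_cuts d p ! (a' - 1)"
    "a' - 1 < length (xi_cuts d p)"
    using assms unfolding xi_cut_def xi_len_def by auto
  moreover have "sorted (xi_cuts d p)"
    unfolding xi_cuts_def by simp
  ultimately show ?thesis
    using assms(2) by (simp add: sorted_nth_mono)
qed

lemma xi_cut_first_le:
  assumes "b \<in> {1..p}" "0 < d b"
  shows "xi_cut d p 1 \<le> d b"
proof (cases "d b < 1")
  case True
  then have "d b \<in> set (xi_cuts d p)"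
    using assms by (auto simp: set_xi_cuts)
  then obtain i where i: "i < length (xi_cuts d p)" "xi_cuts d p ! i = d b"
    by (metis in_set_conv_nth)
  then have "xi_cut d p 1 = xi_cuts d p ! 0"
    unfolding xi_cut_def xi_len_def by auto
  moreover have "sorted (xi_cuts d p)"
    unfolding xi_cuts_def by simp
  ultimately show ?thesis
    using i by (metis sorted_nth_mono zero_le)
next
  case False
  then show ?thesis
    using xi_cut_le_one[of d p 1] by simp
qed

lemma xi_below_le: "xi_below d p a \<le> p"
proof -
  have "xi_below d p a \<le> card {1..p}"
    unfolding xi_below_def by (rule card_mono) auto
  then show ?thesis
    by simp
qed

lemma xi_below_mono: "mono_on {1..xi_len d p} (xi_below d p)"
proof (rule mono_onI)
  fix a a' assume "a \<in> {1..xi_len d p}" "a' \<in> {1..xi_len d p}" "a \<le> a'"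
  then have "xi_cut d p a \<le> xi_cut d p a'"
    by (intro xi_cut_mono) auto
  then show "xi_below d p a \<le> xi_below d p a'"
    unfolding xi_below_def by (intro card_mono) auto
qed

lemma xi_below_first_less:
  assumes "mono_on {1..p} d" "b \<in> {1..p}" "0 < d b"
  shows "xi_below d p 1 < b"
proof -
  have "{b' \<in> {1..p}. d b' < xi_cut d p 1} \<subseteq> {1..<b}"
  proof
    fix b' assume b': "b' \<in> {b' \<in> {1..p}. d b' < xi_cut d p 1}"
    have "\<not> b \<le> b'"
    proof
      assume "b \<le> b'"
      then have "d b \<le> d b'"
        using assms(2) b' by (intro mono_onD[OF assms(1)]) auto
      then show False
        using xi_cut_first_le[of b p d] assms(2,3) b' by simp
    qed
    then show "b' \<in> {1..<b}"
      using b' by auto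
  qed
  then have "xi_below d p 1 \<le> card {1..<b}"
    unfolding xi_below_def by (intro card_mono) auto
  then show ?thesis
    using assms(2) by auto
qed

lemma xi_below_last_ge:
  assumes "mono_on {1..p} d" "b \<in> {1..p}" "d b < 1"
  shows "b \<le> xi_below d p (xi_len d p)"
proof -
  have "{1..b} \<subseteq> {b' \<in> {1..p}. d b' < xi_cut d p (xi_len d p)}"
  proof
    fix b' assume b': "b' \<in> {1..b}"
    then have "d b' \<le> d b"
      using assms(2) by (intro mono_onD[OF assms(1)]) auto
    then show "b' \<in> {b' \<in> {1..p}. d b' < xi_cut d p (xi_len d p)}"
      using assms(2,3) b' by (auto simp: xi_cut_last)
  qed
  then have "card {1..b} \<le> xi_below d p (xi_len d p)"
    unfolding xi_below_def by (intro card_mono) auto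
  then show ?thesis
    by simp
qed

(* Elements of A are indexed from 1 as j_1 < ... < j_p: adm_coroot bs A b is beta_(j_b),
   adm_vertex Rp bs w A k is u_k, and n_a = m_a + neg_count Rp bs A m_a m_(a+1). *)
definition adm_coroot :: "('a \<times> int) list \<Rightarrow> nat set \<Rightarrow> nat \<Rightarrow> 'a \<times> int" where
  "adm_coroot bs A b = bs ! (sorted_list_of_set A ! (b - 1))"

definition adm_dval :: "'a::euclidean_space \<Rightarrow> ('a \<times> int) list \<Rightarrow> nat set \<Rightarrow> nat \<Rightarrow> real" where
  "adm_dval lam bs A b = dval lam (adm_coroot bs A b)"

definition adm_vertex ::
    "'a::euclidean_space set \<Rightarrow> ('a \<times> int) list \<Rightarrow> ('a \<Rightarrow> 'a) \<Rightarrow> nat set \<Rightarrow> nat \<Rightarrow> 'a \<Rightarrow> 'a" where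
  "adm_vertex Rp bs w A k = walk w (take k (adm_roots Rp bs A))"

definition neg_count :: "'a set \<Rightarrow> ('a \<times> int) list \<Rightarrow> nat set \<Rightarrow> nat \<Rightarrow> nat \<Rightarrow> nat" where
  "neg_count Rp bs A i j = card {b \<in> {1..card A}. i < b \<and> b \<le> j \<and> fst (adm_coroot bs A b) \<notin> Rp}"

lemma Xi_eq:
  fixes Rp :: "'a::euclidean_space set" and lam :: 'a and bs :: "('a \<times> int) list"
    and w :: "'a \<Rightarrow> 'a" and A :: "nat set"
  defines "d \<equiv> adm_dval lam bs A"
  defines "t \<equiv> xi_len d (card A)"
  defines "m \<equiv> xi_below d (card A)"
  defines "u \<equiv> adm_vertex Rp bs w A"
  shows "Xi Rp lam bs w A =
    (map (\<lambda>i. u (m (t + 1 - i))) [1..<t + 1],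
     map (\<lambda>i. u (m (t - i) + neg_count Rp bs A (m (t - i)) (m (t - i + 1)))) [1..<t],
     map (\<lambda>i. 1 - xi_cut d (card A) (t - i)) [0..<t + 1])"
  unfolding Xi_def Let_def assms xi_len_def xi_below_def xi_cut_def xi_cuts_def neg_count_def
    adm_dval_def adm_coroot_def adm_vertex_def length_sorted_list_of_set
  by (rule refl)

lemma iota_Xi:
  fixes Rp :: "'a::euclidean_space set" and lam :: 'a and bs :: "('a \<times> int) list"
    and w :: "'a \<Rightarrow> 'a" and A :: "nat set"
  defines "d \<equiv> adm_dval lam bs A"
  defines "t \<equiv> xi_len d (card A)"
  defines "m \<equiv> xi_below d (card A)"
  shows "iota (Xi Rp lam bs w A) = adm_vertex Rp bs w A (m t)"
proof -
  have "fst (Xi Rp lam bs w A) = map (\<lambda>i. adm_vertex Rp bs w A (m (t + 1 - i))) [1..<t + 1]"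
    unfolding assms by (simp only: Xi_eq fst_conv)
  moreover have "1 < t + 1"
    unfolding t_def xi_len_def by simp
  ultimately show ?thesis
    unfolding iota_def by (simp add: hd_map hd_upt del: upt_Suc)
qed

lemma nega_Xi:
  fixes Rp :: "'a::euclidean_space set" and lam :: 'a and bs :: "('a \<times> int) list"
    and w :: "'a \<Rightarrow> 'a" and A :: "nat set"
  defines "d \<equiv> adm_dval lam bs A"
  defines "t \<equiv> xi_len d (card A)"
  defines "m \<equiv> xi_below d (card A)"
  defines "u \<equiv> adm_vertex Rp bs w A"
  shows "nega R Rp (Xi Rp lam bs w A) =
    (\<Sum>a\<in>{1..<t}. qbg_dist R Rp (u (m a)) (u (m a + neg_count Rp bs A (m a) (m (a + 1)))))"
    (is "_ = (\<Sum>a\<in>{1..<t}. ?h a)")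
proof -
  have "fst (Xi Rp lam bs w A) = map (\<lambda>i. u (m (t + 1 - i))) [1..<t + 1]"
    and "fst (snd (Xi Rp lam bs w A)) =
      map (\<lambda>i. u (m (t - i) + neg_count Rp bs A (m (t - i)) (m (t - i + 1)))) [1..<t]"
    unfolding assms by (simp_all only: Xi_eq fst_conv snd_conv)
  then have "nega R Rp (Xi Rp lam bs w A) = (\<Sum>k<t - 1. ?h (t - 1 - k))"
    unfolding nega_def by (intro sum.cong) (auto simp del: upt_Suc)
  also have "\<dots> = (\<Sum>a\<in>{1..<t}. ?h a)"
    by (rule sum.reindex_bij_witness[of _ "\<lambda>a. t - 1 - a" "\<lambda>k. t - 1 - k"]) auto
  finally show ?thesis .
qed

lemma neg_count_le_diff: "neg_count Rp bs A i j \<le> j - i"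
proof -
  have "neg_count Rp bs A i j \<le> card {i<..j}"
    unfolding neg_count_def by (rule card_mono) auto
  then show ?thesis
    by simp
qed

lemma neg_count_add:
  assumes "i \<le> j" "j \<le> k"
  shows "neg_count Rp bs A i k = neg_count Rp bs A i j + neg_count Rp bs A j k"
proof -
  let ?S = "\<lambda>i j. {b \<in> {1..card A}. i < b \<and> b \<le> j \<and> fst (adm_coroot bs A b) \<notin> Rp}"
  have "?S i k = ?S i j \<union> ?S j k"
    using assms by auto
  moreover have "card (?S i j \<union> ?S j k) = card (?S i j) + card (?S j k)"
    by (rule card_Un_disjoint) auto
  ultimately show ?thesis
    unfolding neg_count_def by simp
qed

lemma length_adm_roots: "length (adm_roots Rp bs A) = card A"
  by (simp add: adm_roots_def)

lemma admissible_subpath: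
  assumes "admissible R Rp bs w A" "i \<le> j" "j \<le> card A"
  shows "\<exists>as. length as = j - i \<and> qbg_path R Rp (adm_vertex Rp bs w A i) as (adm_vertex Rp bs w A j)"
proof -
  define L where "L = adm_roots Rp bs A"
  have take_j: "take j L = take i L @ take (j - i) (drop i L)"
    using assms(2) take_add[of i "j - i" L] by simp
  have "qbg_path R Rp w (take j L @ drop j L) (walk w L)"
    using assms(1) unfolding admissible_def L_def by simp
  then have "qbg_path R Rp w (take j L) (walk w (take j L))"
    unfolding qbg_path_append by blast
  then have "qbg_path R Rp (walk w (take i L)) (take (j - i) (drop i L)) (walk w (take j L))"
    unfolding take_j qbg_path_append by blast
  moreover have "length (take (j - i) (drop i L)) = j - i"
    using assms(3) unfolding L_def by (simp add: length_adm_roots)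
  ultimately show ?thesis
    unfolding adm_vertex_def L_def by blast
qed

lemma nega_Xi_parity:
  fixes Rp :: "'a::euclidean_space set" and lam :: 'a and bs :: "('a \<times> int) list"
    and w :: "'a \<Rightarrow> 'a" and A :: "nat set"
  assumes R: "root_system R" and Rp: "pos_system R Rp" and adm: "admissible R Rp bs w A"
  defines "d \<equiv> adm_dval lam bs A"
  defines "t \<equiv> xi_len d (card A)"
  defines "m \<equiv> xi_below d (card A)"
  shows "even (int (nega R Rp (Xi Rp lam bs w A)) - int (neg_count Rp bs A (m 1) (m t)))"
proof -
  let ?u = "adm_vertex Rp bs w A" and ?N = "\<lambda>a. neg_count Rp bs A (m a) (m (a + 1))"
  have step_parity: "even (int (qbg_dist R Rp (?u (m a)) (?u (m a + ?N a))) - int (?N a))" for a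
  proof -
    have "?N a \<le> m (a + 1) - m a" "m a \<le> card A" "m (a + 1) \<le> card A"
      unfolding m_def by (rule neg_count_le_diff xi_below_le)+
    then have "m a + ?N a \<le> card A"
      by linarith
    then obtain as where "length as = ?N a" "qbg_path R Rp (?u (m a)) as (?u (m a + ?N a))"
      using admissible_subpath[OF adm, of "m a" "m a + ?N a"] by auto
    then show ?thesis
      using qbg_dist_parity[OF R Rp] by simp
  qed
  have "int (nega R Rp (Xi Rp lam bs w A)) - (\<Sum>a\<in>{1..<t}. int (?N a))
      = (\<Sum>a\<in>{1..<t}. int (qbg_dist R Rp (?u (m a)) (?u (m a + ?N a))) - int (?N a))"
    unfolding nega_Xi d_def t_def m_def by (simp add: sum_subtractf)
  moreover have "even \<dots>"
    by (rule dvd_sum) (rule step_parity)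
  moreover have "(\<Sum>a\<in>{1..<t}. ?N a) = neg_count Rp bs A (m 1) (m t)"
    using xi_below_mono[of d "card A"] unfolding t_def m_def
    by (intro sum_telescope_additive neg_count_add) (simp_all add: xi_len_def)
  ultimately show ?thesis
    by (simp flip: of_nat_sum)
qed

lemma sorted_list_of_set_nth_mem:
  assumes "finite A" "b \<in> {1..card A}"
  shows "sorted_list_of_set A ! (b - 1) \<in> A"
  using assms nth_mem[of "b - 1" "sorted_list_of_set A"] by auto

lemma adm_coroot_mem:
  assumes "A \<subseteq> {..<length bs}" "b \<in> {1..card A}"
  shows "adm_coroot bs A b \<in> set bs"
proof -
  have "sorted_list_of_set A ! (b - 1) \<in> A"
    using assms finite_subset by (blast intro: sorted_list_of_set_nth_mem)
  then show ?thesis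
    using assms(1) unfolding adm_coroot_def by auto
qed

lemma adm_dval_mono:
  assumes "sorted_wrt (inv_less Rp ord lam) bs" "A \<subseteq> {..<length bs}"
  shows "mono_on {1..card A} (adm_dval lam bs A)"
proof (rule mono_onI)
  fix b b' assume b: "b \<in> {1..card A}" "b' \<in> {1..card A}" "b \<le> b'"
  show "adm_dval lam bs A b \<le> adm_dval lam bs A b'"
  proof (cases "b = b'")
    case False
    let ?js = "sorted_list_of_set A"
    have "?js ! (b - 1) < ?js ! (b' - 1)"
      using b False by (intro sorted_wrt_nth_less[OF strict_sorted_list_of_set]) auto
    moreover have "?js ! (b' - 1) < length bs"
      using sorted_list_of_set_nth_mem[OF _ b(2)] assms(2) finite_subset by blast
    ultimately have "inv_less Rp ord lam (adm_coroot bs A b) (adm_coroot bs A b')"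
      unfolding adm_coroot_def by (rule sorted_wrt_nth_less[OF assms(1)])
    then show ?thesis
      unfolding inv_less_def adm_dval_def by auto
  qed simp
qed

lemma adm_dval_pos:
  assumes "set bs = inv_set R Rp lam" "A \<subseteq> {..<length bs}" "b \<in> {1..card A}"
    and "fst (adm_coroot bs A b) \<notin> Rp"
  shows "0 < adm_dval lam bs A b"
proof -
  obtain \<gamma> k where \<beta>: "adm_coroot bs A b = (\<gamma>, k)"
    by fastforce
  then have "(\<gamma>, k) \<in> inv_set R Rp lam" "\<gamma> \<notin> Rp"
    using adm_coroot_mem[OF assms(2,3)] assms(1,4) by auto
  then have "0 < k" "real_of_int k \<le> cpair lam \<gamma>"
    unfolding inv_set_def by auto
  then show ?thesis
    unfolding adm_dval_def \<beta> dval_def by simp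
qed

lemma adm_dval_less_one:
  assumes "set bs = inv_set R Rp lam" "A \<subseteq> {..<length bs}" "b \<in> {1..card A}"
    and "fst (adm_coroot bs A b) \<in> Rp"
  shows "adm_dval lam bs A b < 1"
proof -
  obtain \<gamma> k where \<beta>: "adm_coroot bs A b = (\<gamma>, k)"
    by fastforce
  then have "(\<gamma>, k) \<in> inv_set R Rp lam" "\<gamma> \<in> Rp"
    using adm_coroot_mem[OF assms(2,3)] assms(1,4) by auto
  then have "0 \<le> k" "real_of_int k < cpair lam \<gamma>"
    unfolding inv_set_def by auto
  then show ?thesis
    unfolding adm_dval_def \<beta> dval_def by simp
qed

lemma n_adm_eq_neg_count:
  assumes "finite A"
  shows "n_adm Rp bs A = neg_count Rp bs A 0 (card A)"
proof -
  define h where "h b = sorted_list_of_set A ! (b - 1)" for b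
  have inj: "inj_on h {1..card A}"
    unfolding h_def by (rule inj_onI) (auto simp: nth_eq_iff_index_eq)
  have img: "h ` {1..card A} = A"
  proof
    show "h ` {1..card A} \<subseteq> A"
      using sorted_list_of_set_nth_mem[OF assms] unfolding h_def by blast
    show "A \<subseteq> h ` {1..card A}"
    proof
      fix j assume "j \<in> A"
      then obtain i where "i < card A" "sorted_list_of_set A ! i = j"
        using assms by (metis in_set_conv_nth length_sorted_list_of_set set_sorted_list_of_set)
      then show "j \<in> h ` {1..card A}"
        unfolding h_def by (intro image_eqI[of _ _ "i + 1"]) auto
    qed
  qed
  let ?neg = "{b \<in> {1..card A}. fst (adm_coroot bs A b) \<notin> Rp}"
  have "h ` ?neg = {j \<in> h ` {1..card A}. fst (bs ! j) \<notin> Rp}"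
    unfolding adm_coroot_def h_def by blast
  then have "{j \<in> A. fst (bs ! j) \<notin> Rp} = h ` ?neg"
    unfolding img by simp
  moreover have "inj_on h ?neg"
    using inj by (rule inj_on_subset) blast
  moreover have "neg_count Rp bs A 0 (card A) = card ?neg"
    unfolding neg_count_def by (rule arg_cong[where f = card]) auto
  ultimately show ?thesis
    unfolding n_adm_def by (simp add: card_image)
qed

lemma n_adm_split:
  fixes Rp :: "'a::euclidean_space set" and lam :: 'a and bs :: "('a \<times> int) list"
    and A :: "nat set"
  assumes bs: "set bs = inv_set R Rp lam" and sorted: "sorted_wrt (inv_less Rp ord lam) bs"
    and A: "A \<subseteq> {..<length bs}"
  defines "d \<equiv> adm_dval lam bs A"
  defines "t \<equiv> xi_len d (card A)"
  defines "m \<equiv> xi_below d (card A)"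
  shows "n_adm Rp bs A = neg_count Rp bs A (m 1) (m t) + (card A - m t)"
proof -
  let ?N = "neg_count Rp bs A" and ?neg = "\<lambda>b. fst (adm_coroot bs A b) \<notin> Rp"
  have mono: "mono_on {1..card A} d"
    unfolding d_def using sorted A by (rule adm_dval_mono)
  have "1 \<le> t"
    unfolding t_def xi_len_def by simp
  then have m_le: "m 1 \<le> m t" "m t \<le> card A"
    using xi_below_mono[of d "card A"] xi_below_le[of d "card A"] unfolding m_def t_def
    by (auto intro: mono_onD)
  have first: "m 1 < b" if "b \<in> {1..card A}" "?neg b" for b
    using xi_below_first_less[OF mono that(1) adm_dval_pos[OF bs A that, folded d_def]]
    unfolding m_def .
  have last: "?neg b" if "b \<in> {1..card A}" "m t < b" for b
    using xi_below_last_ge[OF mono that(1)] adm_dval_less_one[OF bs A that(1), folded d_def] that(2)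
    unfolding m_def t_def by fastforce
  have "?N 0 (m 1) = 0"
    using first unfolding neg_count_def by fastforce
  moreover have "?N (m t) (card A) = card A - m t"
  proof -
    have "{b \<in> {1..card A}. m t < b \<and> b \<le> card A \<and> ?neg b} = {m t<..card A}"
      using last by auto
    then show ?thesis
      unfolding neg_count_def by simp
  qed
  moreover have "n_adm Rp bs A = ?N 0 (m 1) + ?N (m 1) (m t) + ?N (m t) (card A)"
  proof -
    have "n_adm Rp bs A = ?N 0 (card A)"
      using finite_subset[OF A] by (simp add: n_adm_eq_neg_count)
    also have "\<dots> = ?N 0 (m 1) + ?N (m 1) (card A)"
      using m_le by (intro neg_count_add) auto
    also have "\<dots> = ?N 0 (m 1) + (?N (m 1) (m t) + ?N (m t) (card A))"
      using neg_count_add[OF m_le, of Rp bs A] by simp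
    finally show ?thesis
      by simp
  qed
  ultimately show ?thesis
    by simp
qed

lemma end_iota_wlen_parity:
  fixes Rp :: "'a::euclidean_space set" and lam :: 'a and bs :: "('a \<times> int) list"
    and w :: "'a \<Rightarrow> 'a" and A :: "nat set"
  assumes R: "root_system R" and Rp: "pos_system R Rp" and adm: "admissible R Rp bs w A"
  defines "d \<equiv> adm_dval lam bs A"
  defines "t \<equiv> xi_len d (card A)"
  defines "m \<equiv> xi_below d (card A)"
  shows "even (int (wlen Rp (end_adm Rp bs w A)) - int (wlen Rp (iota (Xi Rp lam bs w A)))
    - int (card A - m t))"
proof -
  let ?u = "adm_vertex Rp bs w A"
  have "end_adm Rp bs w A = ?u (card A)"
    unfolding end_adm_def adm_vertex_def by (simp add: length_adm_roots)
  moreover have "iota (Xi Rp lam bs w A) = ?u (m t)"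
    unfolding m_def t_def d_def by (rule iota_Xi)
  moreover obtain as where "length as = card A - m t" "qbg_path R Rp (?u (m t)) as (?u (card A))"
    using admissible_subpath[OF adm, of "m t" "card A"] xi_below_le unfolding m_def by blast
  ultimately show ?thesis
    using qbg_path_wlen_parity[OF R Rp] by metis
qed

theorem corollary5p9:
  fixes R Rp :: "'a::euclidean_space set" and lam :: 'a
    and ord :: "'a \<Rightarrow> 'a \<Rightarrow> bool" and w :: "'a \<Rightarrow> 'a"
    and bs :: "('a \<times> int) list" and A :: "nat set"
  assumes "root_system R" and "pos_system R Rp"
    and "lam \<in> weights R"
    and "ord \<in> RO Rp lam"
    and "w \<in> weyl R"
    and "set bs = inv_set R Rp lam" and "sorted_wrt (inv_less Rp ord lam) bs"
    and "admissible R Rp bs w A"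
  shows "int (n_adm Rp bs A) mod 2 =
         (int (nega R Rp (Xi Rp lam bs w A)) + int (wlen Rp (end_adm Rp bs w A))
            - int (wlen Rp (iota (Xi Rp lam bs w A)))) mod 2"
proof -
  define d where "d = adm_dval lam bs A"
  define t where "t = xi_len d (card A)"
  define m where "m = xi_below d (card A)"
  have "A \<subseteq> {..<length bs}"
    using assms(8) unfolding admissible_def by blast
  then have "n_adm Rp bs A = neg_count Rp bs A (m 1) (m t) + (card A - m t)"
    unfolding m_def t_def d_def using assms(6,7) by (intro n_adm_split)
  moreover have "even (int (nega R Rp (Xi Rp lam bs w A)) - int (neg_count Rp bs A (m 1) (m t)))"
    unfolding m_def t_def d_def using assms(1,2,8) by (rule nega_Xi_parity)
  moreover have "even (int (wlen Rp (end_adm Rp bs w A)) - int (wlen Rp (iota (Xi Rp lam bs w A)))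
      - int (card A - m t))"
    unfolding m_def t_def d_def using assms(1,2,8) by (rule end_iota_wlen_parity)
  ultimately show ?thesis
    unfolding mod_eq_dvd_iff by presburger
qed

end
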